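(* Let $S$ be a nonempty set of graphs on $\Pi$. Then for every integer $i$ with $1\le i<\mathrm{eqdom}(S)$, $(i+(n-\mathrm{cov}_i(S)))$-set agreement is solvable in one round on the closed-above model generated by $S$.
   Context: Fix a set of $n$ processes $\Pi=\{p_1,\dots,p_n\}$. A graph is a directed graph with vertex set $\Pi$; every graph is assumed to contain all self-loops $(p,p)$. For a graph $G$ and $p\in\Pi$, $Out_G(p)=\{q:(p,q)\in E(G)\}$ and $In_G(p)=\{q:(q,p)\in E(G)\}$; for $P\subseteq\Pi$, $Out_G(P)=\bigcup_{p\in P}Out_G(p)$. Computation proceeds in failure-free, communication-closed rounds: in each round $r$ a graph $G_r$ is chosen and each process $p$ receives in round $r$ exactly the round-$r$ messages of the processes in $In_{G_r}(p)$. A communication model is a set of infinite sequences of graphs; an execution is allowed iff its sequence of round graphs belongs to the model. For a graph $G$, $\uparrow G=\{H: E(H)\supseteq E(G)\}$. The closed-above model generated by a set $S$ of graphs is $(\bigcup_{G\in S}\uparrow G)^\omega$. In $k$-set agreement each process starts with an input from a totally ordered set $V_{in}$ and must decide a value so that every decided value is the input of some process and at most $k$ distinct values are decided; it is solvable in $r$ rounds on a model if some algorithm guarantees this, with all processes deciding after $r$ rounds, in every allowed execution and for every input assignment. For a graph $G$, $\mathrm{eqdom}(G)=\min\{i\in[1,n]: \forall P\subseteq\Pi,\ |P|=i\Rightarrow Out_G(P)=\Pi\}$, and $\mathrm{eqdom}(S)=\max_{G\in S}\mathrm{eqdom}(G)$. For a graph $G$ and $i\in[1,n]$, the $i$-th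 covering number is $\mathrm{cov}_i(G)=\min_{P\subseteq\Pi,|P|=i}|Out_G(P)|$, and $\mathrm{cov}_i(S)=\min_{G\in S}\mathrm{cov}_i(G)$. *)

theory Defs
  imports Main
begin

text \<open>Processes are the elements of a finite type 'p (so n = card (UNIV :: 'p set)).
  A graph is an edge set containing all self-loops.\<close>

type_synonym 'p graph = "('p \<times> 'p) set"

definition is_graph :: "'p graph \<Rightarrow> bool" where
  "is_graph G \<longleftrightarrow> (\<forall>p. (p, p) \<in> G)"

definition Out :: "'p graph \<Rightarrow> 'p \<Rightarrow> 'p set" where
  "Out G p = {q. (p, q) \<in> G}"

definition In :: "'p graph \<Rightarrow> 'p \<Rightarrow> 'p set" where
  "In G p = {q. (q, p) \<in> G}"

definition OutSet :: "'p graph \<Rightarrow> 'p set \<Rightarrow> 'p set" where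
  "OutSet G P = (\<Union>p\<in>P. Out G p)"

text \<open>Upward closure of a graph and the closed-above model generated by S.
  A communication model is a set of infinite graph sequences; the graph of
  round r+1 is the value at index r.\<close>

definition up :: "'p graph \<Rightarrow> 'p graph set" where
  "up G = {H. is_graph H \<and> G \<subseteq> H}"

definition closed_above_model :: "'p graph set \<Rightarrow> (nat \<Rightarrow> 'p graph) set" where
  "closed_above_model S = {\<sigma>. \<forall>r. \<sigma> r \<in> (\<Union>G\<in>S. up G)}"

text \<open>Full-information views: after r rounds a process's local state is its view.\<close>

datatype ('p, 'v) view = VLeaf 'v | VNode "'p \<Rightarrow> ('p, 'v) view option"

fun exec_view :: "(nat \<Rightarrow> 'p graph) \<Rightarrow> ('p \<Rightarrow> 'v) \<Rightarrow> nat \<Rightarrow> 'p \<Rightarrow> ('p, 'v) view" where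
  "exec_view \<sigma> x 0 p = VLeaf (x p)"
| "exec_view \<sigma> x (Suc r) p =
     VNode (\<lambda>q. if q \<in> In (\<sigma> r) p then Some (exec_view \<sigma> x r q) else None)"

definition set_agreement_solvable ::
  "nat \<Rightarrow> nat \<Rightarrow> (nat \<Rightarrow> 'p graph) set \<Rightarrow> ('v::linorder) itself \<Rightarrow> bool" where
  "set_agreement_solvable k r M _ \<longleftrightarrow>
     (\<exists>dec :: 'p \<Rightarrow> ('p, 'v) view \<Rightarrow> 'v.
        \<forall>\<sigma>\<in>M. \<forall>x :: 'p \<Rightarrow> 'v.
          (\<forall>p. dec p (exec_view \<sigma> x r p) \<in> range x) \<and>
          card (range (\<lambda>p. dec p (exec_view \<sigma> x r p))) \<le> k)"

definition eqdom :: "('p::finite) graph \<Rightarrow> nat" where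
  "eqdom G = Min {i \<in> {1..card (UNIV :: 'p set)}. \<forall>P::'p set. card P = i \<longrightarrow> OutSet G P = UNIV}"

definition eqdom_set :: "('p::finite) graph set \<Rightarrow> nat" where
  "eqdom_set S = Max (eqdom ` S)"

definition cov :: "nat \<Rightarrow> ('p::finite) graph \<Rightarrow> nat" where
  "cov i G = Min {card (OutSet G P) | P::'p set. card P = i}"

definition cov_set :: "nat \<Rightarrow> ('p::finite) graph set \<Rightarrow> nat" where
  "cov_set i S = Min (cov i ` S)"

end

theory Submission
  imports Defs
begin

text \<open>Every process decides the minimum input it hears of in the single round. Let L be the
  i smallest decided values and P a set of i processes whose inputs are exactly L. Every process
  hearing from P decides a value in L or below, so each decided value outside L is decided by a
  process outside Out(P); there are at most n - cov_i(S) of those, since the round graph contains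
  a graph of S.\<close>

definition decide_min_heard :: "'p \<Rightarrow> ('p, 'v::linorder) view \<Rightarrow> 'v" where
  "decide_min_heard p w =
     (case w of VLeaf v \<Rightarrow> v | VNode f \<Rightarrow> Min {v. \<exists>q. f q = Some (VLeaf v)})"

lemma decide_min_heard_one_round:
  fixes \<sigma> :: "nat \<Rightarrow> 'p graph" and x :: "'p \<Rightarrow> 'v::linorder"
  shows "decide_min_heard p (exec_view \<sigma> x 1 p) = Min (x ` In (\<sigma> 0) p)"
proof -
  have "{v. \<exists>q. (if q \<in> In (\<sigma> 0) p then Some (VLeaf (x q) :: ('p, 'v) view) else None) = Some (VLeaf v)}
        = x ` In (\<sigma> 0) p"
    by (auto split: if_splits)
  moreover have "decide_min_heard p (exec_view \<sigma> x 1 p) =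
      Min {v. \<exists>q. (if q \<in> In (\<sigma> 0) p then Some (VLeaf (x q) :: ('p, 'v) view) else None)
        = Some (VLeaf v)}"
    unfolding decide_min_heard_def One_nat_def exec_view.simps view.case by (rule refl)
  ultimately show ?thesis
    by metis
qed

lemma Min_image_In_mem:
  assumes "is_graph (H :: ('p::finite) graph)"
  shows "Min (x ` In H p) \<in> x ` In H p"
  using assms by (intro Min_in) (auto simp: is_graph_def In_def)

lemma exists_least_subset:
  fixes V :: "'a::linorder set"
  assumes "finite V" and "i \<le> card V"
  obtains L where "L \<subseteq> V" "card L = i" "\<And>l v. l \<in> L \<Longrightarrow> v \<in> V - L \<Longrightarrow> l < v"
proof
  define xs where "xs = sorted_list_of_set V"
  have sorted: "sorted_wrt (<) xs" and set_xs: "set xs = V" and len: "length xs = card V"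
    and distinct: "distinct xs"
    using assms(1) by (simp_all add: xs_def)
  show "set (take i xs) \<subseteq> V"
    using set_xs by (metis set_take_subset)
  show "card (set (take i xs)) = i"
    using assms(2) len distinct by (simp add: distinct_card)
  fix l v assume l: "l \<in> set (take i xs)" and v: "v \<in> V - set (take i xs)"
  obtain k where k: "k < i" "k < length xs" "l = xs ! k"
    using l by (auto simp: in_set_conv_nth)
  obtain j where j: "j < length xs" "v = xs ! j"
    using v set_xs by (auto simp: in_set_conv_nth)
  have "\<not> j < i"
    using v j by (auto simp: in_set_conv_nth)
  with k j sorted show "l < v"
    by (simp add: sorted_wrt_iff_nth_less)
qed

lemma OutSet_mono: "G \<subseteq> H \<Longrightarrow> OutSet G P \<subseteq> OutSet H P"
  by (auto simp: OutSet_def Out_def)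

lemma cov_le_card_OutSet:
  fixes G :: "('p::finite) graph"
  assumes "card P = i"
  shows "cov i G \<le> card (OutSet G P)"
  unfolding cov_def
proof (rule Min_le)
  show "finite {card (OutSet G P) |P::'p set. card P = i}"
    by (rule finite_subset[of _ "(\<lambda>P. card (OutSet G P)) ` UNIV"]) auto
qed (use assms in auto)

lemma cov_set_le_card_OutSet:
  fixes S :: "('p::finite) graph set"
  assumes "G \<in> S" "G \<subseteq> H" "card P = i"
  shows "cov_set i S \<le> card (OutSet H P)"
proof -
  have "cov_set i S \<le> cov i G"
    using assms(1) by (simp add: cov_set_def)
  also have "\<dots> \<le> card (OutSet G P)"
    using assms(3) by (rule cov_le_card_OutSet)
  also have "\<dots> \<le> card (OutSet H P)"
    using assms(2) by (simp add: OutSet_mono card_mono)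
  finally show ?thesis .
qed

lemma card_range_Min_In_le:
  fixes H :: "('p::finite) graph" and x :: "'p \<Rightarrow> 'v::linorder"
  assumes graph: "is_graph H"
    and covering: "\<And>P. card P = i \<Longrightarrow> c \<le> card (OutSet H P)"
  shows "card (range (\<lambda>p. Min (x ` In H p))) \<le> i + (card (UNIV :: 'p set) - c)"
proof -
  define D where "D p = Min (x ` In H p)" for p
  define V where "V = range D"
  have D_in: "D p \<in> x ` In H p" for p
    unfolding D_def using graph by (rule Min_image_In_mem)
  have D_le: "(q, p) \<in> H \<Longrightarrow> D p \<le> x q" for p q
    by (simp add: D_def In_def)
  show ?thesis
  proof (cases "card V \<le> i")
    case True
    then show ?thesis by (simp add: V_def D_def)
  next
    case False
    obtain L where LV: "L \<subseteq> V" and card_L: "card L = i"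
      and least: "\<And>l v. l \<in> L \<Longrightarrow> v \<in> V - L \<Longrightarrow> l < v"
      using exists_least_subset[of V i] False by (auto simp: V_def)
    have "\<forall>l\<in>L. \<exists>q. x q = l"
    proof
      fix l assume "l \<in> L"
      then obtain p where "l = D p"
        using LV by (auto simp: V_def)
      then show "\<exists>q. x q = l"
        using D_in[of p] by auto
    qed
    then obtain src where src: "\<And>l. l \<in> L \<Longrightarrow> x (src l) = l"
      by metis
    define P where "P = src ` L"
    have "inj_on src L"
      by (metis inj_onI src)
    then have "card P = i"
      by (simp add: P_def card_image card_L)
    then have c_le: "c \<le> card (OutSet H P)"
      by (rule covering)
    have "V - L \<subseteq> D ` (- OutSet H P)"
    proof
      fix v assume v: "v \<in> V - L"
      then obtain p where p: "v = D p"
        by (auto simp: V_def)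
      have "p \<notin> OutSet H P"
      proof
        assume "p \<in> OutSet H P"
        then obtain l where l: "l \<in> L" "(src l, p) \<in> H"
          by (auto simp: OutSet_def Out_def P_def)
        then have "D p \<le> l"
          using D_le src by fastforce
        with least[OF l(1) v] p show False
          by simp
      qed
      with p show "v \<in> D ` (- OutSet H P)"
        by blast
    qed
    then have "card (V - L) \<le> card (D ` (- OutSet H P))"
      by (simp add: card_mono)
    also have "\<dots> \<le> card (- OutSet H P)"
      by (rule card_image_le) simp
    also have "\<dots> = card (UNIV :: 'p set) - card (OutSet H P)"
      by (simp add: Compl_eq_Diff_UNIV card_Diff_subset)
    finally have "card (V - L) \<le> card (UNIV :: 'p set) - c"
      using c_le by linarith
    moreover have "card V = card L + card (V - L)"
      using LV finite_subset[OF LV] by (simp add: V_def card_Diff_subset card_mono)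
    ultimately show ?thesis
      using card_L by (simp add: V_def D_def)
  qed
qed

theorem theorem3:
  fixes S :: "('p::finite) graph set" and i :: nat
  assumes "S \<noteq> {}"
    and "\<forall>G\<in>S. is_graph G"
    and "1 \<le> i" and "i < eqdom_set S"
  shows "set_agreement_solvable (i + (card (UNIV :: 'p set) - cov_set i S)) 1
           (closed_above_model S) (TYPE('v::linorder))"
  unfolding set_agreement_solvable_def
proof (intro exI[of _ decide_min_heard] ballI allI conjI)
  fix \<sigma> and x :: "'p \<Rightarrow> 'v"
  assume "\<sigma> \<in> closed_above_model S"
  then obtain G where G: "G \<in> S" "G \<subseteq> \<sigma> 0" and graph: "is_graph (\<sigma> 0)"
    by (auto simp: closed_above_model_def up_def)
  show "decide_min_heard p (exec_view \<sigma> x 1 p) \<in> range x" for p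
    using Min_image_In_mem[OF graph, of x p] unfolding decide_min_heard_one_round by blast
  have "card (range (\<lambda>p. Min (x ` In (\<sigma> 0) p))) \<le> i + (card (UNIV :: 'p set) - cov_set i S)"
    using graph cov_set_le_card_OutSet[OF G] by (rule card_range_Min_In_le)
  then show "card (range (\<lambda>p. decide_min_heard p (exec_view \<sigma> x 1 p)))
      \<le> i + (card (UNIV :: 'p set) - cov_set i S)"
    unfolding decide_min_heard_one_round .
qed

end
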